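(* Let $D$ be a finite domain and let $\mathcal F$ be a family of functions of the form $f:D^L\to D$. Then there exists a finite family $\Lambda$ of promise relations over $D$ in which every member has the form $(P,P)$ (a CSP) such that $\mathcal F=\operatorname{poly}(\Lambda)$ if and only if $\mathcal F$ is projection-closed, finitizable, a clone, and contains the identity function $\operatorname{id}_D$.
   Context: A promise relation over $D$ is a pair $(P,Q)$ with $P\subseteq Q\subseteq D^k$. $f:D^L\to D$ is a weak polymorphism of $(P,Q)$ if for all $x^{(1)},\dots,x^{(L)}\in P$, $(f(x^{(1)}_1,\dots,x^{(L)}_1),\dots,f(x^{(1)}_k,\dots,x^{(L)}_k))\in Q$; $\operatorname{poly}(\Lambda)$ is the set of functions that are weak polymorphisms of every member of $\Lambda$. For $f:D^L\to D$ and $\pi:[L]\to[R]$, $f^\pi:D^R\to D$ is $f^\pi(y)=f(x)$ with $x_i=y_{\pi(i)}$. $\mathcal F$ is projection-closed if $f^\pi\in\mathcal F$ for all $f\in\mathcal F$ of arity $L$, all $R$, and all $\pi:[L]\to[R]$; finitizable if there is $R\in\mathbb N$ such that for every $L$ and $f:D^L\to D$, $f\in\mathcal F$ iff $f^\pi\in\mathcal F$ for all $\pi:[L]\to[R]$. $\mathcal F$ is a clone if for all $f\in\mathcal F$ of arity $L_1$ and all $g_1,\dots,g_{L_1}\in\mathcal F$ of arity $L_2$, the function $h:D^{L_1L_2}\to D$, $h(x^{(1)},\dots,x^{(L_1)})=f(g_1(x^{(1)}),\dots,g_{L_1}(x^{(L_1)}))$ (with $x^{(j)}\in D^{L_2}$),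 is in $\mathcal F$. $\operatorname{id}_D(x)=x$. *)

theory Defs
  imports "HOL-Library.FuncSet"
begin

text \<open>Tuples in D^n are represented extensionally as functions on {..<n}.
  A function f : D^L -> D is a pair (L, f) with f extensional on D^L.\<close>

definition cube :: "nat \<Rightarrow> (nat \<Rightarrow> 'd) set" where
  "cube n = {..<n} \<rightarrow>\<^sub>E (UNIV :: 'd set)"

definition is_func :: "nat \<Rightarrow> ((nat \<Rightarrow> 'd) \<Rightarrow> 'd) \<Rightarrow> bool" where
  "is_func L f \<longleftrightarrow> f \<in> cube L \<rightarrow>\<^sub>E (UNIV :: 'd set)"

definition minor :: "nat \<Rightarrow> ((nat \<Rightarrow> 'd) \<Rightarrow> 'd) \<Rightarrow> nat \<Rightarrow> (nat \<Rightarrow> nat) \<Rightarrow> ((nat \<Rightarrow> 'd) \<Rightarrow> 'd)" where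
  "minor L f R \<pi> = (\<lambda>y \<in> cube R. f (\<lambda>i \<in> {..<L}. y (\<pi> i)))"

definition proj_closed :: "(nat \<times> ((nat \<Rightarrow> 'd) \<Rightarrow> 'd)) set \<Rightarrow> bool" where
  "proj_closed F \<longleftrightarrow> (\<forall>(L, f) \<in> F. \<forall>R \<ge> 1. \<forall>\<pi> \<in> {..<L} \<rightarrow> {..<R}. (R, minor L f R \<pi>) \<in> F)"

definition finitizable :: "(nat \<times> ((nat \<Rightarrow> 'd) \<Rightarrow> 'd)) set \<Rightarrow> bool" where
  "finitizable F \<longleftrightarrow> (\<exists>R::nat. \<forall>L \<ge> 1. \<forall>f. is_func L f \<longrightarrow>
      ((L, f) \<in> F \<longleftrightarrow> (\<forall>\<pi> \<in> {..<L} \<rightarrow> {..<R}. (R, minor L f R \<pi>) \<in> F)))"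

text \<open>h(x^(1),...,x^(L1)) = f(g_1(x^(1)),...,g_L1(x^(L1))), block j of x is x(j*L2+i), i<L2.\<close>
definition compose :: "nat \<Rightarrow> ((nat \<Rightarrow> 'd) \<Rightarrow> 'd) \<Rightarrow> nat \<Rightarrow> (nat \<Rightarrow> (nat \<Rightarrow> 'd) \<Rightarrow> 'd) \<Rightarrow> ((nat \<Rightarrow> 'd) \<Rightarrow> 'd)" where
  "compose L1 f L2 g = (\<lambda>x \<in> cube (L1 * L2).
      f (\<lambda>j \<in> {..<L1}. g j (\<lambda>i \<in> {..<L2}. x (j * L2 + i))))"

definition is_clone :: "(nat \<times> ((nat \<Rightarrow> 'd) \<Rightarrow> 'd)) set \<Rightarrow> bool" where
  "is_clone F \<longleftrightarrow> (\<forall>(L1, f) \<in> F. \<forall>L2 g. (\<forall>j < L1. (L2, g j) \<in> F) \<longrightarrow> (L1 * L2, compose L1 f L2 g) \<in> F)"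

definition id_D :: "(nat \<Rightarrow> 'd) \<Rightarrow> 'd" where
  "id_D = (\<lambda>x \<in> cube 1. x 0)"

definition promise_rel :: "nat \<Rightarrow> (nat \<Rightarrow> 'd) set \<Rightarrow> (nat \<Rightarrow> 'd) set \<Rightarrow> bool" where
  "promise_rel k P Q \<longleftrightarrow> P \<subseteq> Q \<and> Q \<subseteq> cube k"

definition weak_poly :: "nat \<Rightarrow> (nat \<Rightarrow> 'd) set \<Rightarrow> (nat \<Rightarrow> 'd) set \<Rightarrow> nat \<Rightarrow> ((nat \<Rightarrow> 'd) \<Rightarrow> 'd) \<Rightarrow> bool" where
  "weak_poly k P Q L f \<longleftrightarrow>
     (\<forall>xs \<in> {..<L} \<rightarrow> P. (\<lambda>i \<in> {..<k}. f (\<lambda>l \<in> {..<L}. xs l i)) \<in> Q)"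

definition poly :: "(nat \<times> (nat \<Rightarrow> 'd) set \<times> (nat \<Rightarrow> 'd) set) set \<Rightarrow> (nat \<times> ((nat \<Rightarrow> 'd) \<Rightarrow> 'd)) set" where
  "poly \<Lambda> = {(L, f). L \<ge> 1 \<and> is_func L f \<and> (\<forall>(k, P, Q) \<in> \<Lambda>. weak_poly k P Q L f)}"

end

theory Submission
  imports Defs
begin

text \<open>
  Weak polymorphisms of a relation P are closed under minors and composition and contain
  the identity. Moreover f is a polymorphism of P as soon as all its minors of arity card P
  are: any L tuples of P take at most card P distinct values, so they factor through a minor.
  Conversely, let R witness finitizability and enumerate D^R as c. The single relation whose
  tuples are the truth tables (along c) of the R-ary members of F is preserved by F, since
  applying f to the tables of g_1, ..., g_L gives the table of f(g_1(x), ..., g_L(x)), a member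
  by the clone and minor properties. Applying a polymorphism f to the tables of the
  projections gives the table of each R-ary minor of f, so these minors lie in F, and
  finitizability puts f in F.
\<close>

lemma finite_cube: "finite (cube n :: (nat \<Rightarrow> 'd::finite) set)"
  by (simp add: cube_def finite_PiE)

lemma restrict_in_cube [simp]: "(\<lambda>i\<in>{..<n}. h i) \<in> cube n"
  by (simp add: cube_def)

lemma restrict_cube: "x \<in> cube n \<Longrightarrow> (\<lambda>i\<in>{..<n}. x i) = x"
  unfolding cube_def by (metis PiE_restrict restrict_ext)

lemma is_func_minor [simp]: "is_func R (minor L f R \<pi>)"
  by (simp add: is_func_def minor_def)

lemma is_func_compose [simp]: "is_func (L1 * L2) (compose L1 f L2 g)"
  by (simp add: is_func_def compose_def)

lemma block_index_less: "j < (L1::nat) \<Longrightarrow> l < L2 \<Longrightarrow> j * L2 + l < L1 * L2"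
proof -
  assume "j < L1" "l < L2"
  then have "j * L2 + l < Suc j * L2" by simp
  also have "\<dots> \<le> L1 * L2" using \<open>j < L1\<close> by (intro mult_right_mono) auto
  finally show ?thesis .
qed

lemma proj_closedD:
  "proj_closed F \<Longrightarrow> (L, f) \<in> F \<Longrightarrow> R \<ge> 1 \<Longrightarrow> \<pi> \<in> {..<L} \<rightarrow> {..<R} \<Longrightarrow> (R, minor L f R \<pi>) \<in> F"
  unfolding proj_closed_def by blast

lemma is_cloneD:
  "is_clone F \<Longrightarrow> (L1, f) \<in> F \<Longrightarrow> (\<And>j. j < L1 \<Longrightarrow> (L2, g j) \<in> F) \<Longrightarrow> (L1 * L2, compose L1 f L2 g) \<in> F"
  unfolding is_clone_def by blast

lemma minor_compose_mod:
  assumes "x \<in> cube R"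
  shows "minor (L * R) (compose L f R G) R (\<lambda>m. m mod R) x = f (\<lambda>j\<in>{..<L}. G j x)"
proof -
  have "(\<lambda>l\<in>{..<R}. (\<lambda>m\<in>{..<L * R}. x (m mod R)) (j * R + l)) = x" if "j < L" for j
  proof -
    have "(\<lambda>l\<in>{..<R}. (\<lambda>m\<in>{..<L * R}. x (m mod R)) (j * R + l)) = (\<lambda>l\<in>{..<R}. x l)"
      using block_index_less[OF that] by (intro restrict_ext) auto
    then show ?thesis using restrict_cube[OF assms] by simp
  qed
  then show ?thesis
    using assms by (simp add: minor_def compose_def cong: restrict_cong)
qed

definition colwise :: "nat \<Rightarrow> nat \<Rightarrow> ((nat \<Rightarrow> 'd) \<Rightarrow> 'd) \<Rightarrow> (nat \<Rightarrow> nat \<Rightarrow> 'd) \<Rightarrow> nat \<Rightarrow> 'd" where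
  "colwise k L f xs = (\<lambda>i\<in>{..<k}. f (\<lambda>l\<in>{..<L}. xs l i))"

lemma weak_poly_colwise: "weak_poly k P Q L f \<longleftrightarrow> (\<forall>xs \<in> {..<L} \<rightarrow> P. colwise k L f xs \<in> Q)"
  by (simp add: weak_poly_def colwise_def)

lemma colwise_cong: "(\<And>l. l < L \<Longrightarrow> xs l = ys l) \<Longrightarrow> colwise k L f xs = colwise k L f ys"
  unfolding colwise_def by (metis lessThan_iff restrict_ext)

lemma colwise_minor:
  assumes "\<pi> \<in> {..<L} \<rightarrow> {..<R}"
  shows "colwise k R (minor L f R \<pi>) xs = colwise k L f (\<lambda>l. xs (\<pi> l))"
proof -
  have "(\<lambda>l\<in>{..<L}. (\<lambda>r\<in>{..<R}. xs r i) (\<pi> l)) = (\<lambda>l\<in>{..<L}. xs (\<pi> l) i)" for i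
    using assms by (intro restrict_ext) auto
  then show ?thesis by (simp add: colwise_def minor_def)
qed

lemma colwise_compose:
  "colwise k (L1 * L2) (compose L1 f L2 g) xs =
     colwise k L1 f (\<lambda>j. colwise k L2 (g j) (\<lambda>l. xs (j * L2 + l)))"
proof -
  have "(\<lambda>l\<in>{..<L2}. (\<lambda>m\<in>{..<L1 * L2}. xs m i) (j * L2 + l)) = (\<lambda>l\<in>{..<L2}. xs (j * L2 + l) i)"
    if "j < L1" for i j
    using block_index_less[OF that] by (intro restrict_ext) auto
  then have "(\<lambda>j\<in>{..<L1}. g j (\<lambda>l\<in>{..<L2}. (\<lambda>m\<in>{..<L1 * L2}. xs m i) (j * L2 + l)))
      = (\<lambda>j\<in>{..<L1}. colwise k L2 (g j) (\<lambda>l. xs (j * L2 + l)) i)" if "i < k" for i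
    using that by (intro restrict_ext) (simp add: colwise_def)
  then show ?thesis by (auto simp: colwise_def compose_def intro!: restrict_ext)
qed

lemma colwise_id_D: "xs 0 \<in> cube k \<Longrightarrow> colwise k 1 id_D xs = xs 0"
  by (simp add: colwise_def id_D_def restrict_cube)

lemma weak_poly_minor:
  assumes "weak_poly k P Q L f" and "\<pi> \<in> {..<L} \<rightarrow> {..<R}"
  shows "weak_poly k P Q R (minor L f R \<pi>)"
  using assms by (auto simp: weak_poly_colwise colwise_minor)

lemma weak_poly_compose:
  assumes "weak_poly k P P L1 f" and "\<And>j. j < L1 \<Longrightarrow> weak_poly k P P L2 (g j)"
  shows "weak_poly k P P (L1 * L2) (compose L1 f L2 g)"
  unfolding weak_poly_colwise colwise_compose
proof
  fix xs assume "xs \<in> {..<L1 * L2} \<rightarrow> P"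
  then have "(\<lambda>l. xs (j * L2 + l)) \<in> {..<L2} \<rightarrow> P" if "j < L1" for j
    using block_index_less[OF that] by auto
  with assms(2) have "(\<lambda>j. colwise k L2 (g j) (\<lambda>l. xs (j * L2 + l))) \<in> {..<L1} \<rightarrow> P"
    by (auto simp: weak_poly_colwise)
  with assms(1) show "colwise k L1 f (\<lambda>j. colwise k L2 (g j) (\<lambda>l. xs (j * L2 + l))) \<in> P"
    by (simp add: weak_poly_colwise)
qed

lemma weak_poly_id_D:
  assumes "P \<subseteq> Q" and "P \<subseteq> cube k"
  shows "weak_poly k P Q 1 id_D"
  unfolding weak_poly_colwise
proof
  fix xs assume "xs \<in> {..<1::nat} \<rightarrow> P"
  then have "xs 0 \<in> P" by auto
  with assms have "colwise k 1 id_D xs = xs 0" by (intro colwise_id_D) auto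
  with \<open>xs 0 \<in> P\<close> assms(1) show "colwise k 1 id_D xs \<in> Q" by auto
qed

lemma factor_through_card:
  assumes "finite P" and "P \<noteq> {}" and "card P \<le> R" and "xs \<in> {..<L} \<rightarrow> P"
  obtains ys \<pi> where "ys \<in> {..<R} \<rightarrow> P" and "\<pi> \<in> {..<L} \<rightarrow> {..<R}"
    and "\<And>l. l < L \<Longrightarrow> xs l = ys (\<pi> l)"
proof -
  obtain e where e: "bij_betw e {..<card P} P"
    using ex_bij_betw_nat_finite[OF assms(1)] by (auto simp: atLeast0LessThan)
  have "card P > 0" using assms(1,2) by (simp add: card_gt_0_iff)
  define ys where "ys c = e (if c < card P then c else 0)" for c
  define \<pi> where "\<pi> l = inv_into {..<card P} e (xs l)" for l
  have "ys \<in> {..<R} \<rightarrow> P"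
    using e \<open>card P > 0\<close> by (auto simp: ys_def bij_betw_def)
  moreover have "\<pi> l < card P" and "ys (\<pi> l) = xs l" if "l < L" for l
  proof -
    have "xs l \<in> e ` {..<card P}" using assms(4) e that by (auto simp: bij_betw_def)
    then have "\<pi> l \<in> {..<card P}" and "e (\<pi> l) = xs l"
      unfolding \<pi>_def by (rule inv_into_into, rule f_inv_into_f)
    then show "\<pi> l < card P" "ys (\<pi> l) = xs l" by (simp_all add: ys_def)
  qed
  moreover from this(1) have "\<pi> \<in> {..<L} \<rightarrow> {..<R}" using assms(3) by fastforce
  ultimately show ?thesis using that by metis
qed

lemma weak_poly_iff_minors:
  assumes "finite P" and "card P \<le> R" and "L \<ge> 1"
  shows "weak_poly k P Q L f \<longleftrightarrow> (\<forall>\<pi> \<in> {..<L} \<rightarrow> {..<R}. weak_poly k P Q R (minor L f R \<pi>))"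
proof (intro iffI ballI)
  assume minors: "\<forall>\<pi> \<in> {..<L} \<rightarrow> {..<R}. weak_poly k P Q R (minor L f R \<pi>)"
  show "weak_poly k P Q L f" unfolding weak_poly_colwise
  proof
    fix xs assume xs: "xs \<in> {..<L} \<rightarrow> P"
    with assms(3) have "xs 0 \<in> P" by auto
    then have "P \<noteq> {}" by blast
    then obtain ys \<pi> where ys: "ys \<in> {..<R} \<rightarrow> P" and \<pi>: "\<pi> \<in> {..<L} \<rightarrow> {..<R}"
      and xs_eq: "\<And>l. l < L \<Longrightarrow> xs l = ys (\<pi> l)"
      using factor_through_card[OF assms(1) _ assms(2) xs] by blast
    have "colwise k L f xs = colwise k R (minor L f R \<pi>) ys"
      using xs_eq by (simp add: colwise_minor[OF \<pi>] cong: colwise_cong)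
    also have "\<dots> \<in> Q" using minors \<pi> ys by (auto simp: weak_poly_colwise)
    finally show "colwise k L f xs \<in> Q" .
  qed
qed (rule weak_poly_minor)

lemma poly_proj_closed: "proj_closed (poly \<Lambda>)"
  by (auto simp: proj_closed_def poly_def intro: weak_poly_minor)

lemma poly_is_clone:
  assumes "\<forall>(k, P, Q) \<in> \<Lambda>. P = Q"
  shows "is_clone (poly \<Lambda>)"
  unfolding is_clone_def
proof (clarify)
  fix L1 f L2 g assume f: "(L1, f) \<in> poly \<Lambda>" and g: "\<forall>j < L1. (L2, g j) \<in> poly \<Lambda>"
  then have "L1 \<ge> 1" "L2 \<ge> 1" by (auto simp: poly_def)
  moreover have "weak_poly k P P (L1 * L2) (compose L1 f L2 g)" if "(k, P, P) \<in> \<Lambda>" for k P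
    using f g that by (intro weak_poly_compose) (auto simp: poly_def)
  ultimately show "(L1 * L2, compose L1 f L2 g) \<in> poly \<Lambda>"
    using assms by (fastforce simp: poly_def)
qed

lemma id_D_in_poly:
  assumes "\<forall>(k, P, Q) \<in> \<Lambda>. promise_rel k P Q"
  shows "(1, id_D) \<in> poly \<Lambda>"
proof -
  have "weak_poly k P Q 1 id_D" if "(k, P, Q) \<in> \<Lambda>" for k P Q
    using assms that by (intro weak_poly_id_D) (fastforce simp: promise_rel_def)+
  then show ?thesis by (auto simp: poly_def is_func_def id_D_def)
qed

lemma poly_finitizable:
  assumes "finite \<Lambda>" and "\<forall>(k, P, Q) \<in> \<Lambda>. finite P"
  shows "finitizable (poly \<Lambda>)"
proof -
  define R where "R = Max (insert 1 ((\<lambda>(k, P, Q). card P) ` \<Lambda>))"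
  have "R \<ge> 1" using assms(1) by (simp add: R_def)
  have card_le: "card P \<le> R" if "(k, P, Q) \<in> \<Lambda>" for k P Q
    unfolding R_def using assms(1) that by (intro Max_ge) force+
  have "(L, f) \<in> poly \<Lambda> \<longleftrightarrow> (\<forall>\<pi> \<in> {..<L} \<rightarrow> {..<R}. (R, minor L f R \<pi>) \<in> poly \<Lambda>)"
    if "L \<ge> 1" and "is_func L f" for L f
  proof -
    have "weak_poly k P Q L f \<longleftrightarrow> (\<forall>\<pi> \<in> {..<L} \<rightarrow> {..<R}. weak_poly k P Q R (minor L f R \<pi>))"
      if "(k, P, Q) \<in> \<Lambda>" for k P Q
      using assms(2) that card_le[OF that] \<open>L \<ge> 1\<close> by (intro weak_poly_iff_minors) auto
    then show ?thesis using that \<open>R \<ge> 1\<close> by (simp add: poly_def) blast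
  qed
  then show ?thesis unfolding finitizable_def by blast
qed

lemma poly_csp_properties:
  fixes \<Lambda> :: "(nat \<times> (nat \<Rightarrow> 'd::finite) set \<times> (nat \<Rightarrow> 'd) set) set"
  assumes "finite \<Lambda>" and csp: "\<forall>(k, P, Q) \<in> \<Lambda>. promise_rel k P Q \<and> P = Q"
  shows "proj_closed (poly \<Lambda>) \<and> finitizable (poly \<Lambda>) \<and> is_clone (poly \<Lambda>) \<and> (1, id_D) \<in> poly \<Lambda>"
proof -
  have "finite P" if "(k, P, Q) \<in> \<Lambda>" for k P Q
  proof -
    have "P \<subseteq> cube k" using csp that by (auto simp: promise_rel_def)
    then show ?thesis using finite_cube finite_subset by blast
  qed
  then have "\<forall>(k, P, Q) \<in> \<Lambda>. finite P" by blast
  moreover have "\<forall>(k, P, Q) \<in> \<Lambda>. P = Q" and "\<forall>(k, P, Q) \<in> \<Lambda>. promise_rel k P Q"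
    using csp by auto
  ultimately show ?thesis
    using poly_proj_closed poly_finitizable[OF assms(1)] poly_is_clone id_D_in_poly by blast
qed

definition projection :: "nat \<Rightarrow> nat \<Rightarrow> (nat \<Rightarrow> 'd) \<Rightarrow> 'd" where
  "projection R j = minor 1 id_D R (\<lambda>_. j)"

lemma projection_apply: "y \<in> cube R \<Longrightarrow> projection R j y = y j"
  by (simp add: projection_def minor_def id_D_def)

text \<open>With c enumerating D^R, table k c g is the truth table of an R-ary g as a k-tuple.\<close>

definition table :: "nat \<Rightarrow> (nat \<Rightarrow> nat \<Rightarrow> 'd) \<Rightarrow> ((nat \<Rightarrow> 'd) \<Rightarrow> 'd) \<Rightarrow> nat \<Rightarrow> 'd" where
  "table k c g = (\<lambda>i\<in>{..<k}. g (c i))"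

definition tables :: "nat \<Rightarrow> (nat \<Rightarrow> nat \<Rightarrow> 'd) \<Rightarrow> nat \<Rightarrow> (nat \<times> ((nat \<Rightarrow> 'd) \<Rightarrow> 'd)) set \<Rightarrow> (nat \<Rightarrow> 'd) set" where
  "tables k c R F = table k c ` {g. (R, g) \<in> F}"

lemma tables_subset_cube: "tables k c R F \<subseteq> cube k"
  by (auto simp: tables_def table_def)

lemma table_inj:
  assumes "cube R \<subseteq> c ` {..<k}" and "is_func R g" and "is_func R h"
    and "table k c g = table k c h"
  shows "g = h"
proof
  fix y show "g y = h y"
  proof (cases "y \<in> cube R")
    case True
    with assms(1) obtain i where "i < k" "y = c i" by auto
    with fun_cong[OF assms(4), of i] show ?thesis by (simp add: table_def)
  next
    case False
    with assms(2,3) show ?thesis by (simp add: is_func_def PiE_def extensional_def)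
  qed
qed

lemma colwise_tables:
  assumes "c \<in> {..<k} \<rightarrow> cube R"
  shows "colwise k L f (\<lambda>l. table k c (G l)) =
    table k c (minor (L * R) (compose L f R G) R (\<lambda>m. m mod R))"
proof -
  have "f (\<lambda>l\<in>{..<L}. table k c (G l) i) = minor (L * R) (compose L f R G) R (\<lambda>m. m mod R) (c i)"
    if "i < k" for i
  proof -
    have "(\<lambda>l\<in>{..<L}. table k c (G l) i) = (\<lambda>l\<in>{..<L}. G l (c i))"
      using that by (simp add: table_def)
    moreover have "c i \<in> cube R" using assms that by blast
    ultimately show ?thesis by (simp add: minor_compose_mod)
  qed
  then show ?thesis by (auto simp: colwise_def table_def intro!: restrict_ext)
qed

lemma colwise_projection_tables:
  assumes "c \<in> {..<k} \<rightarrow> cube R"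
  shows "colwise k L f (\<lambda>l. table k c (projection R (\<pi> l))) = table k c (minor L f R \<pi>)"
proof -
  have "(\<lambda>l\<in>{..<L}. table k c (projection R (\<pi> l)) i) = (\<lambda>l\<in>{..<L}. c i (\<pi> l))"
    if "i < k" for i
  proof -
    have "c i \<in> cube R" using assms that by blast
    with that show ?thesis by (intro restrict_ext) (simp add: table_def projection_apply)
  qed
  then show ?thesis
    using assms by (auto simp: colwise_def table_def minor_def intro!: restrict_ext)
qed

lemma clone_weak_poly_tables:
  assumes "\<forall>(L, f) \<in> F. L \<ge> 1" and "proj_closed F" and "is_clone F"
    and "(L, f) \<in> F" and c: "c \<in> {..<k} \<rightarrow> cube R"
  shows "weak_poly k (tables k c R F) (tables k c R F) L f"
  unfolding weak_poly_colwise
proof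
  fix xs assume "xs \<in> {..<L} \<rightarrow> tables k c R F"
  then have "\<forall>l \<in> {..<L}. \<exists>g. (R, g) \<in> F \<and> xs l = table k c g"
    by (auto simp: tables_def)
  then have "\<exists>G. \<forall>l \<in> {..<L}. (R, G l) \<in> F \<and> xs l = table k c (G l)"
    by (rule bchoice)
  then obtain G where G: "\<forall>l \<in> {..<L}. (R, G l) \<in> F \<and> xs l = table k c (G l)" ..
  have "L \<ge> 1" using assms(1,4) by auto
  with G have "(R, G 0) \<in> F" by simp
  then have "R \<ge> 1" using assms(1) by auto
  define h where "h = minor (L * R) (compose L f R G) R (\<lambda>m. m mod R)"
  have "(L * R, compose L f R G) \<in> F"
    using G by (intro is_cloneD[OF assms(3,4)]) auto
  then have "(R, h) \<in> F"
    unfolding h_def by (rule proj_closedD[OF assms(2)]) (use \<open>R \<ge> 1\<close> in auto)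
  have "colwise k L f xs = colwise k L f (\<lambda>l. table k c (G l))"
    using G by (intro colwise_cong) auto
  also have "\<dots> = table k c h"
    unfolding h_def by (rule colwise_tables[OF c])
  finally show "colwise k L f xs \<in> tables k c R F"
    using \<open>(R, h) \<in> F\<close> by (simp add: tables_def)
qed

lemma weak_poly_tables_minor_in_clone:
  assumes "\<forall>(L, f) \<in> F. is_func L f" and "proj_closed F" and "(1, id_D) \<in> F"
    and c: "c \<in> {..<k} \<rightarrow> cube R" "cube R \<subseteq> c ` {..<k}"
    and "weak_poly k (tables k c R F) (tables k c R F) L f"
    and "L \<ge> 1" and \<pi>: "\<pi> \<in> {..<L} \<rightarrow> {..<R}"
  shows "(R, minor L f R \<pi>) \<in> F"
proof -
  have "\<pi> 0 < R" using \<pi> \<open>L \<ge> 1\<close> by auto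
  then have "R \<ge> 1" by simp
  have "(R, projection R (\<pi> l)) \<in> F" if "l < L" for l
    unfolding projection_def using \<pi> that \<open>R \<ge> 1\<close> by (intro proj_closedD[OF assms(2,3)]) auto
  then have "(\<lambda>l. table k c (projection R (\<pi> l))) \<in> {..<L} \<rightarrow> tables k c R F"
    by (auto simp: tables_def)
  with assms(6) have "colwise k L f (\<lambda>l. table k c (projection R (\<pi> l))) \<in> tables k c R F"
    by (simp add: weak_poly_colwise)
  then have "table k c (minor L f R \<pi>) \<in> tables k c R F"
    by (simp only: colwise_projection_tables[OF c(1)])
  then obtain h where "(R, h) \<in> F" and "table k c h = table k c (minor L f R \<pi>)"
    by (auto simp: tables_def)
  moreover from this(1) have "is_func R h" using assms(1) by auto
  ultimately show ?thesis using table_inj[OF c(2) _ is_func_minor] by metis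
qed

lemma clone_eq_poly_tables:
  assumes F: "\<forall>(L, f) \<in> F. L \<ge> 1 \<and> is_func L f" and "proj_closed F" and "is_clone F"
    and "(1, id_D) \<in> F"
    and R: "\<forall>L \<ge> 1. \<forall>f. is_func L f \<longrightarrow>
      ((L, f) \<in> F \<longleftrightarrow> (\<forall>\<pi> \<in> {..<L} \<rightarrow> {..<R}. (R, minor L f R \<pi>) \<in> F))"
    and c: "bij_betw c {..<k} (cube R)"
  shows "F = poly {(k, tables k c R F, tables k c R F)}"
proof -
  have c_into: "c \<in> {..<k} \<rightarrow> cube R" and c_onto: "cube R \<subseteq> c ` {..<k}"
    using c by (auto simp: bij_betw_def)
  have "(L, f) \<in> poly {(k, tables k c R F, tables k c R F)}" if "(L, f) \<in> F" for L f
  proof -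
    have "\<forall>(L, f) \<in> F. L \<ge> 1" using F by auto
    then have "weak_poly k (tables k c R F) (tables k c R F) L f"
      using assms(2,3) that c_into by (rule clone_weak_poly_tables)
    then show ?thesis using F that by (auto simp: poly_def)
  qed
  moreover have "(L, f) \<in> F" if "(L, f) \<in> poly {(k, tables k c R F, tables k c R F)}" for L f
  proof -
    from that have L: "L \<ge> 1" "is_func L f"
      and wp: "weak_poly k (tables k c R F) (tables k c R F) L f"
      by (auto simp: poly_def)
    have "\<forall>(L, f) \<in> F. is_func L f" using F by auto
    then have "(R, minor L f R \<pi>) \<in> F" if "\<pi> \<in> {..<L} \<rightarrow> {..<R}" for \<pi>
      using assms(2,4) c_into c_onto wp L(1) that by (rule weak_poly_tables_minor_in_clone)
    with R L show ?thesis by blast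
  qed
  ultimately show ?thesis unfolding set_eq_iff by (metis surj_pair)
qed

theorem lemmaE4:
  fixes F :: "(nat \<times> ((nat \<Rightarrow> 'd::finite) \<Rightarrow> 'd)) set"
  assumes "\<forall>(L, f) \<in> F. L \<ge> 1 \<and> is_func L f"
  shows "(\<exists>\<Lambda>. finite \<Lambda> \<and> (\<forall>(k, P, Q) \<in> \<Lambda>. promise_rel k P Q \<and> P = Q) \<and> F = poly \<Lambda>)
         \<longleftrightarrow> proj_closed F \<and> finitizable F \<and> is_clone F \<and> (1, id_D) \<in> F"
proof
  assume "\<exists>\<Lambda>. finite \<Lambda> \<and> (\<forall>(k, P, Q) \<in> \<Lambda>. promise_rel k P Q \<and> P = Q) \<and> F = poly \<Lambda>"
  then show "proj_closed F \<and> finitizable F \<and> is_clone F \<and> (1, id_D) \<in> F"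
    using poly_csp_properties by blast
next
  assume "proj_closed F \<and> finitizable F \<and> is_clone F \<and> (1, id_D) \<in> F"
  then have "proj_closed F" "finitizable F" "is_clone F" "(1, id_D) \<in> F" by simp_all
  from \<open>finitizable F\<close> obtain R where R: "\<forall>L \<ge> 1. \<forall>f. is_func L f \<longrightarrow>
      ((L, f) \<in> F \<longleftrightarrow> (\<forall>\<pi> \<in> {..<L} \<rightarrow> {..<R}. (R, minor L f R \<pi>) \<in> F))"
    unfolding finitizable_def by blast
  define k where "k = card (cube R :: (nat \<Rightarrow> 'd) set)"
  have "\<exists>c. bij_betw c {..<k} (cube R :: (nat \<Rightarrow> 'd) set)"
    unfolding k_def atLeast0LessThan[symmetric] by (rule ex_bij_betw_nat_finite[OF finite_cube])
  then obtain c where c: "bij_betw c {..<k} (cube R :: (nat \<Rightarrow> 'd) set)" ..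
  define T where "T = tables k c R F"
  have "F = poly {(k, T, T)}"
    unfolding T_def using assms \<open>proj_closed F\<close> \<open>is_clone F\<close> \<open>(1, id_D) \<in> F\<close> R c
    by (rule clone_eq_poly_tables)
  moreover have "promise_rel k T T"
    by (simp add: promise_rel_def T_def tables_subset_cube)
  ultimately show "\<exists>\<Lambda>. finite \<Lambda> \<and> (\<forall>(k, P, Q) \<in> \<Lambda>. promise_rel k P Q \<and> P = Q) \<and> F = poly \<Lambda>"
    by (intro exI[of _ "{(k, T, T)}"]) simp
qed

end
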